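(* Let $m\ge 2$, $k\ge 1$, $N=m^k$, and let $\mathbb{F}_q$ be a finite field with $m\mid q-1$ and $\rho\in\mathbb{F}_q$ a primitive $m$-th root of unity. For $i\in\{1,\ldots,k\}$ let $\mathbf{V}_i$ be the $N\times m^{k-1}$ matrix whose columns are the elements of $\mathcal{V}_i=\left\{\prod_{s=1,s\ne i}^{k}\mathbf{X}_s^{x_s}\mathbf{w} : x_s\in\{0,1,\ldots,m-1\}\right\}$. Then for any $i,j\in\{1,\ldots,k\}$, $$\mathrm{rank}\big([\mathbf{V}_i\ \ \mathbf{X}_j\mathbf{V}_i\ \ \mathbf{X}_j^2\mathbf{V}_i\ \cdots\ \mathbf{X}_j^{m-1}\mathbf{V}_i]\big)=\Big|\bigcup_{l=0}^{m-1}\mathcal{L}(\mathbf{X}_j^l\mathbf{V}_i)\Big|=\begin{cases}m^k,& i=j,\\ m^{k-1},& i\ne j.\end{cases}$$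
   Context: For $s\in\{1,\ldots,k\}$, $\mathbf{X}_s=\mathbf{I}_{m^{s-1}}\otimes\mathrm{blkdiag}\big(\mathbf{I}_{N/m^s},\rho\mathbf{I}_{N/m^s},\ldots,\rho^{m-1}\mathbf{I}_{N/m^s}\big)$, an $N\times N$ diagonal matrix with $\mathbf{X}_s^m=\mathbf{I}_N$; $\otimes$ is the Kronecker product; $\mathbf{w}$ is the all-ones vector of length $N$. Lattice representation: every matrix whose columns are vectors $\prod_{s=1}^k\mathbf{X}_s^{x_s}\mathbf{w}$ with $(x_1,\ldots,x_k)\in\{0,\ldots,m-1\}^k$ is mapped by $\mathcal{L}$ to the set of exponent vectors of its columns (exponents mod $m$); so $\mathcal{L}(\mathbf{X}_j^l\mathbf{V}_i)=\{x+l e_j \bmod m : x\in\mathcal{L}(\mathbf{V}_i)\}$. *)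

theory Defs
  imports "Jordan_Normal_Form.DL_Rank" "HOL-Library.FuncSet"
begin

text \<open>Rows/columns are indexed from 0.  Row r of an N x N matrix, N = m^k, lies in
  block number (r div m^(k-s)) mod m of the s-th Kronecker level.\<close>

definition digit :: "nat \<Rightarrow> nat \<Rightarrow> nat \<Rightarrow> nat \<Rightarrow> nat" where
  "digit m k s r = (r div m ^ (k - s)) mod m"

text \<open>X_s = I_{m^(s-1)} (x) blkdiag(I, rho I, ..., rho^(m-1) I), blocks of size N/m^s.\<close>
definition Xmat :: "'a::field \<Rightarrow> nat \<Rightarrow> nat \<Rightarrow> nat \<Rightarrow> 'a mat" where
  "Xmat \<rho> m k s = mat (m ^ k) (m ^ k)
     (\<lambda>(r, c). if r = c then \<rho> ^ digit m k s r else 0)"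

definition wvec :: "nat \<Rightarrow> nat \<Rightarrow> 'a::field vec" where
  "wvec m k = vec (m ^ k) (\<lambda>_. 1)"

definition colvec :: "'a::field \<Rightarrow> nat \<Rightarrow> nat \<Rightarrow> nat \<Rightarrow> (nat \<Rightarrow> nat) \<Rightarrow> 'a vec" where
  "colvec \<rho> m k i x =
     foldr (\<lambda>s M. M * (Xmat \<rho> m k s ^\<^sub>m x s)) (filter (\<lambda>s. s \<noteq> i) [1..<k+1]) (1\<^sub>m (m ^ k))
       *\<^sub>v wvec m k"

text \<open>Enumeration of the exponent tuples (x_s)_{s ~= i} in {0..m-1}^(k-1):
  t < m^(k-1) is written in base m, its digits assigned to the indices s ~= i.\<close>
definition enum_exp :: "nat \<Rightarrow> nat \<Rightarrow> nat \<Rightarrow> nat \<Rightarrow> (nat \<Rightarrow> nat)" where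
  "enum_exp m k i t = (\<lambda>s. if s \<in> {1..k} \<and> s \<noteq> i
       then (t div m ^ (if s < i then s - 1 else s - 2)) mod m else 0)"

definition Vmat :: "'a::field \<Rightarrow> nat \<Rightarrow> nat \<Rightarrow> nat \<Rightarrow> 'a mat" where
  "Vmat \<rho> m k i = mat_of_cols (m ^ k)
     (map (\<lambda>t. colvec \<rho> m k i (enum_exp m k i t)) [0..<m ^ (k - 1)])"

definition bigmat :: "'a::field \<Rightarrow> nat \<Rightarrow> nat \<Rightarrow> nat \<Rightarrow> nat \<Rightarrow> 'a mat" where
  "bigmat \<rho> m k i j = mat_of_cols (m ^ k)
     (concat (map (\<lambda>l. cols (Xmat \<rho> m k j ^\<^sub>m l * Vmat \<rho> m k i)) [0..<m]))"

text \<open>Lattice representation: exponent vectors (functions on {1..k}, values mod m).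
  L(V_i) = {x : x_i = 0}, and L(X_j^l V) = {x + l e_j mod m : x in L(V)}.\<close>
definition Lat_V :: "nat \<Rightarrow> nat \<Rightarrow> nat \<Rightarrow> (nat \<Rightarrow> nat) set" where
  "Lat_V m k i = {x \<in> {1..k} \<rightarrow>\<^sub>E {..<m}. x i = 0}"

definition Lat_shift :: "nat \<Rightarrow> nat \<Rightarrow> nat \<Rightarrow> (nat \<Rightarrow> nat) set \<Rightarrow> (nat \<Rightarrow> nat) set" where
  "Lat_shift m j l L = (\<lambda>x. x(j := (x j + l) mod m)) ` L"

end

theory Submission
  imports Defs
begin

text \<open>Every column \<open>X\<^sub>j\<^sup>l v\<close> of the block matrix is a character vector
  \<open>r \<mapsto> \<rho>^\<langle>e, digits r\<rangle>\<close> of \<open>(\<int>/m)\<^sup>k\<close>, and its exponent vector \<open>e\<close>, read mod \<open>m\<close>, is the lattice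
  point that \<open>\<L>\<close> assigns to it. Pairing the character of \<open>e\<close> with that of \<open>-e'\<close> gives \<open>m\<^sup>k\<close>
  or \<open>0\<close> according as \<open>e = e'\<close>, and \<open>m \<noteq> 0\<close> in a field containing a primitive \<open>m\<close>-th root of
  unity. Hence columns with distinct lattice points are linearly independent and the rank is the
  number of lattice points. Finally \<open>\<L>(V\<^sub>i)\<close> is the hyperplane \<open>x\<^sub>i = 0\<close>: the shifts along
  \<open>e\<^sub>i\<close> sweep it over all of \<open>{0..m-1}\<^sup>k\<close>, the shifts along \<open>e\<^sub>j\<close>, \<open>j \<noteq> i\<close>, fix it.\<close>

definition primitive_root_of_unity :: "nat \<Rightarrow> 'a::field \<Rightarrow> bool" where
  "primitive_root_of_unity m \<rho> \<longleftrightarrow> \<rho> ^ m = 1 \<and> (\<forall>t. 0 < t \<and> t < m \<longrightarrow> \<rho> ^ t \<noteq> 1)"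

lemma power_mod_root_of_unity:
  fixes \<rho> :: "'a::monoid_mult"
  assumes "\<rho> ^ m = 1"
  shows "\<rho> ^ a = \<rho> ^ (a mod m)"
proof -
  have "\<rho> ^ a = \<rho> ^ (m * (a div m) + a mod m)" by simp
  also have "\<dots> = (\<rho> ^ m) ^ (a div m) * \<rho> ^ (a mod m)" by (simp only: power_add power_mult)
  finally show ?thesis using assms by simp
qed

lemma sum_powers_primitive_root_of_unity:
  assumes prim: "primitive_root_of_unity m \<rho>" and a: "a mod m \<noteq> 0"
  shows "(\<Sum>d<m. \<rho> ^ (a * d)) = 0"
proof (cases "m = 0")
  case False
  have "\<rho> ^ a = \<rho> ^ (a mod m)"
    using prim power_mod_root_of_unity unfolding primitive_root_of_unity_def by blast
  moreover have "0 < a mod m" "a mod m < m" using a False by simp_all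
  ultimately have "\<rho> ^ a \<noteq> 1"
    using prim unfolding primitive_root_of_unity_def by simp
  moreover have "(\<rho> ^ a) ^ m = 1"
  proof -
    have "(\<rho> ^ a) ^ m = (\<rho> ^ m) ^ a"
      by (simp only: power_mult[symmetric] mult.commute)
    then show ?thesis using prim unfolding primitive_root_of_unity_def by simp
  qed
  ultimately have "(\<Sum>d<m. (\<rho> ^ a) ^ d) = 0"
    using power_diff_1_eq[of "\<rho> ^ a" m] by simp
  then show ?thesis by (simp add: power_mult)
qed simp

text \<open>If the characteristic \<open>p\<close> divided \<open>m\<close>, Frobenius would give
  \<open>(\<rho>^(m/p) - 1)^p = \<rho>^m - 1 = 0\<close>, contradicting primitivity.\<close>
lemma of_nat_neq_0_if_primitive_root_of_unity:
  fixes \<rho> :: "'a::field"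
  assumes prim: "primitive_root_of_unity m \<rho>" and "m > 0"
  shows "(of_nat m :: 'a) \<noteq> 0"
proof
  assume m0: "(of_nat m :: 'a) = 0"
  define p where "p = CHAR('a)"
  have "prime p"
    using m0 CHAR_pos_iff assms(2) prime_CHAR_semidom p_def by blast
  moreover have "p dvd m" using m0 of_nat_eq_0_iff_char_dvd p_def by blast
  then obtain m' where m': "m = p * m'" by blast
  ultimately have "0 < m'" "m' < m"
    using assms(2) prime_gt_1_nat by (auto simp: m')
  define y where "y = \<rho> ^ m'"
  have "y ^ p = 1"
    using prim m' unfolding y_def primitive_root_of_unity_def by (simp add: power_mult[symmetric] mult.commute)
  have "(y + (- 1)) ^ p = y ^ p + (- 1) ^ p"
    using freshmans_dream[of p y "-1"] \<open>prime p\<close> p_def by simp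
  also have "(- 1 :: 'a) ^ p = - 1"
    using minus_power_prime_CHAR[of p "1::'a"] \<open>prime p\<close> p_def by simp
  finally have "y = 1" using \<open>y ^ p = 1\<close> by simp
  then show False
    using prim \<open>0 < m'\<close> \<open>m' < m\<close> unfolding y_def primitive_root_of_unity_def by blast
qed

lemma nat_eq_if_digits_eq:
  fixes m :: nat
  assumes "m > 0"
  shows "t < m ^ n \<Longrightarrow> t' < m ^ n \<Longrightarrow> (\<forall>p<n. t div m ^ p mod m = t' div m ^ p mod m) \<Longrightarrow> t = t'"
proof (induction n arbitrary: t t')
  case 0
  then show ?case by simp
next
  case (Suc n)
  have "t div m < m ^ n" "t' div m < m ^ n"
    using Suc.prems(1,2) by (simp_all add: less_mult_imp_div_less mult.commute)
  moreover have "\<forall>p<n. t div m div m ^ p mod m = t' div m div m ^ p mod m"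
    using Suc.prems(3) by (auto simp: div_mult2_eq[symmetric])
  ultimately have "t div m = t' div m" using Suc.IH by blast
  moreover have "t mod m = t' mod m" using Suc.prems(3)[rule_format, of 0] by simp
  ultimately show ?case by (metis div_mult_mod_eq)
qed

definition digits :: "nat \<Rightarrow> nat \<Rightarrow> nat \<Rightarrow> nat \<Rightarrow> nat" where
  "digits m k r = restrict (\<lambda>s. digit m k s r) {1..k}"

lemma bij_betw_digits:
  assumes "m > 0"
  shows "bij_betw (digits m k) {..<m ^ k} (PiE {1..k} (\<lambda>_. {..<m}))"
proof -
  have inj: "inj_on (digits m k) {..<m ^ k}"
  proof
    fix r r' assume r: "r \<in> {..<m ^ k}" and r': "r' \<in> {..<m ^ k}" and eq: "digits m k r = digits m k r'"
    have "r div m ^ p mod m = r' div m ^ p mod m" if "p < k" for p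
    proof -
      have "k - p \<in> {1..k}" "k - (k - p) = p" using that by auto
      then show ?thesis using fun_cong[OF eq, of "k - p"] by (simp add: digits_def digit_def)
    qed
    then show "r = r'" using r r' by (intro nat_eq_if_digits_eq[OF assms, of r k r']) auto
  qed
  moreover have "digits m k ` {..<m ^ k} = PiE {1..k} (\<lambda>_. {..<m})"
  proof (rule card_subset_eq)
    show "digits m k ` {..<m ^ k} \<subseteq> PiE {1..k} (\<lambda>_. {..<m})"
      using assms by (auto simp: digits_def digit_def)
    show "card (digits m k ` {..<m ^ k}) = card (PiE {1..k} (\<lambda>_. {..<m}))"
      using card_image[OF inj] by (simp add: card_PiE)
  qed (simp add: finite_PiE)
  ultimately show ?thesis unfolding bij_betw_def ..
qed

lemma sum_prod_digits:
  fixes f :: "nat \<Rightarrow> nat \<Rightarrow> 'a::comm_semiring_1"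
  assumes "m > 0"
  shows "(\<Sum>r<m ^ k. \<Prod>s\<in>{1..k}. f s (digit m k s r)) = (\<Prod>s\<in>{1..k}. \<Sum>d<m. f s d)"
proof -
  have "(\<Sum>r<m ^ k. \<Prod>s\<in>{1..k}. f s (digit m k s r)) = (\<Sum>r<m ^ k. \<Prod>s\<in>{1..k}. f s (digits m k r s))"
    by (intro sum.cong prod.cong) (auto simp: digits_def)
  also have "\<dots> = (\<Sum>d\<in>PiE {1..k} (\<lambda>_. {..<m}). \<Prod>s\<in>{1..k}. f s (d s))"
    by (rule sum.reindex_bij_betw[OF bij_betw_digits[OF assms]])
  also have "\<dots> = (\<Prod>s\<in>{1..k}. \<Sum>d<m. f s d)"
    by (rule prod_sum_PiE[symmetric]) auto
  finally show ?thesis .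
qed

lemma power_mat_diag: "mat_diag n f ^\<^sub>m a = mat_diag n (\<lambda>r. f r ^ a)"
  by (induction a) (simp_all add: carrier_matD[OF mat_diag_dim] power_commutes)

lemma mat_diag_mult_vec:
  assumes "v \<in> carrier_vec n"
  shows "mat_diag n f *\<^sub>v v = vec n (\<lambda>r. f r * v $ r)"
proof (rule eq_vecI)
  fix r assume "r < dim_vec (vec n (\<lambda>r. f r * v $ r))"
  then have "(mat_diag n f *\<^sub>v v) $ r = (\<Sum>q = 0..<n. (if r = q then f q else 0) * v $ q)"
    using assms by (simp add: mat_diag_def scalar_prod_def)
  also have "\<dots> = (\<Sum>q = 0..<n. if q = r then f r * v $ r else 0)"
    by (rule sum.cong) auto
  finally show "(mat_diag n f *\<^sub>v v) $ r = vec n (\<lambda>r. f r * v $ r) $ r"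
    using \<open>r < _\<close> by simp
qed (use assms in \<open>simp add: mat_diag_def\<close>)

lemma Xmat_eq_mat_diag: "Xmat \<rho> m k s = mat_diag (m ^ k) (\<lambda>r. \<rho> ^ digit m k s r)"
  by (auto simp: Xmat_def mat_diag_def)

text \<open>The column \<open>\<Prod>\<^sub>s X\<^sub>s\<^bsup>e\<^sub>s\<^esup> w\<close> with lattice point \<open>e\<close>: a character of \<open>(\<int>/m)\<^sup>k\<close>,
  evaluated at the base-\<open>m\<close> digits of the row index.\<close>
definition char_vec :: "'a::field \<Rightarrow> nat \<Rightarrow> nat \<Rightarrow> (nat \<Rightarrow> nat) \<Rightarrow> 'a vec" where
  "char_vec \<rho> m k e = vec (m ^ k) (\<lambda>r. \<rho> ^ (\<Sum>s\<in>{1..k}. e s * digit m k s r))"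

lemma char_vec_carrier [simp]: "char_vec \<rho> m k e \<in> carrier_vec (m ^ k)"
  by (simp add: char_vec_def)

lemma dim_vec_char_vec [simp]: "dim_vec (char_vec \<rho> m k e) = m ^ k"
  by (simp add: char_vec_def)

lemma char_vec_cong:
  assumes "\<And>s. s \<in> {1..k} \<Longrightarrow> e s = e' s"
  shows "char_vec \<rho> m k e = char_vec \<rho> m k e'"
  using assms by (simp add: char_vec_def)

lemma char_vec_cong_mod:
  assumes "\<rho> ^ m = 1" and "\<And>s. s \<in> {1..k} \<Longrightarrow> e s mod m = e' s mod m"
  shows "char_vec \<rho> m k e = char_vec \<rho> m k e'"
proof -
  have exponents: "(\<Sum>s\<in>{1..k}. e s * digit m k s r) mod m = (\<Sum>s\<in>{1..k}. e' s * digit m k s r) mod m"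
    for r
  proof -
    have "e s * digit m k s r mod m = e' s * digit m k s r mod m" if "s \<in> {1..k}" for s
    proof -
      have "e s * digit m k s r mod m = (e s mod m) * digit m k s r mod m"
        by (simp add: mod_mult_left_eq)
      also have "\<dots> = (e' s mod m) * digit m k s r mod m" using assms(2)[OF that] by simp
      also have "\<dots> = e' s * digit m k s r mod m" by (simp add: mod_mult_left_eq)
      finally show ?thesis .
    qed
    then have termwise: "(\<Sum>s\<in>{1..k}. e s * digit m k s r mod m) = (\<Sum>s\<in>{1..k}. e' s * digit m k s r mod m)"
      by (rule sum.cong[OF refl])
    have "(\<Sum>s\<in>{1..k}. e s * digit m k s r) mod m = (\<Sum>s\<in>{1..k}. e s * digit m k s r mod m) mod m"
      by (simp only: mod_sum_eq)
    also have "\<dots> = (\<Sum>s\<in>{1..k}. e' s * digit m k s r) mod m"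
      by (simp only: termwise mod_sum_eq)
    finally show ?thesis .
  qed
  have "\<rho> ^ (\<Sum>s\<in>{1..k}. e s * digit m k s r) = \<rho> ^ (\<Sum>s\<in>{1..k}. e' s * digit m k s r)" for r
  proof -
    have "\<rho> ^ (\<Sum>s\<in>{1..k}. e s * digit m k s r) = \<rho> ^ ((\<Sum>s\<in>{1..k}. e s * digit m k s r) mod m)"
      by (rule power_mod_root_of_unity[OF assms(1)])
    also have "\<dots> = \<rho> ^ (\<Sum>s\<in>{1..k}. e' s * digit m k s r)"
      by (simp only: exponents power_mod_root_of_unity[OF assms(1), symmetric])
    finally show ?thesis .
  qed
  then show ?thesis by (simp add: char_vec_def)
qed

lemma colvec_eq_char_vec: "colvec \<rho> m k i x = char_vec \<rho> m k (x(i := 0))"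
proof -
  let ?L = "filter (\<lambda>s. s \<noteq> i) [1..<k+1]"
  let ?f = "\<lambda>r. \<Prod>s\<leftarrow>?L. \<rho> ^ (x s * digit m k s r)"
  have foldr_eq: "foldr (\<lambda>s M. M * (Xmat \<rho> m k s ^\<^sub>m x s)) L (1\<^sub>m (m ^ k))
      = mat_diag (m ^ k) (\<lambda>r. \<Prod>s\<leftarrow>L. \<rho> ^ (x s * digit m k s r))" for L
    by (induction L)
      (simp_all add: Xmat_eq_mat_diag power_mat_diag power_mult[symmetric] mult.commute)
  have prod_eq: "?f r = \<rho> ^ (\<Sum>s\<in>{1..k}. (x(i := 0)) s * digit m k s r)" for r
  proof -
    have "?f r = (\<Prod>s\<in>{1..k} - {i}. \<rho> ^ (x s * digit m k s r))"
      by (subst prod.distinct_set_conv_list[symmetric]) (auto intro!: prod.cong)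
    also have "\<dots> = (\<Prod>s\<in>{1..k}. \<rho> ^ ((x(i := 0)) s * digit m k s r))"
      by (rule prod.mono_neutral_cong_left) auto
    finally show ?thesis by (simp add: power_sum)
  qed
  have "colvec \<rho> m k i x = mat_diag (m ^ k) ?f *\<^sub>v wvec m k"
    unfolding colvec_def foldr_eq ..
  also have "\<dots> = vec (m ^ k) ?f"
    by (rule eq_vecI) (simp_all add: wvec_def mat_diag_mult_vec)
  also have "\<dots> = char_vec \<rho> m k (x(i := 0))"
    unfolding char_vec_def prod_eq ..
  finally show ?thesis .
qed

lemma Xmat_power_mult_char_vec:
  assumes "j \<in> {1..k}"
  shows "Xmat \<rho> m k j ^\<^sub>m l *\<^sub>v char_vec \<rho> m k e = char_vec \<rho> m k (e(j := e j + l))"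
proof -
  have "(\<Sum>s\<in>{1..k}. (e(j := e j + l)) s * digit m k s r)
      = l * digit m k j r + (\<Sum>s\<in>{1..k}. e s * digit m k s r)" (is "?lhs r = _") for r
  proof -
    have "(\<Sum>s\<in>{1..k}. (e(j := e j + l)) s * digit m k s r)
        = (\<Sum>s\<in>{1..k}. e s * digit m k s r + (if s = j then l * digit m k s r else 0))"
      by (rule sum.cong) (auto simp: distrib_right)
    then show ?thesis using assms by (simp add: sum.distrib)
  qed
  then have exponent: "\<rho> ^ ?lhs r = (\<rho> ^ digit m k j r) ^ l * \<rho> ^ (\<Sum>s\<in>{1..k}. e s * digit m k s r)"
    for r
    by (simp add: power_add mult.commute flip: power_mult)
  have "Xmat \<rho> m k j ^\<^sub>m l *\<^sub>v char_vec \<rho> m k e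
      = vec (m ^ k) (\<lambda>r. (\<rho> ^ digit m k j r) ^ l * char_vec \<rho> m k e $ r)"
    by (simp add: Xmat_eq_mat_diag power_mat_diag mat_diag_mult_vec)
  also have "\<dots> = char_vec \<rho> m k (e(j := e j + l))"
    by (rule eq_vecI) (simp_all only: char_vec_def index_vec dim_vec exponent)
  finally show ?thesis .
qed

text \<open>\<open>char_vec \<rho> m k (\<lambda>s. m - e s)\<close> plays the role of the complex conjugate of
  \<open>char_vec \<rho> m k e\<close>.\<close>
lemma scalar_prod_char_vec:
  assumes prim: "primitive_root_of_unity m \<rho>" and "m > 0"
    and e: "e \<in> PiE {1..k} (\<lambda>_. {..<m})" and e': "e' \<in> PiE {1..k} (\<lambda>_. {..<m})"
  shows "char_vec \<rho> m k e \<bullet> char_vec \<rho> m k (\<lambda>s. m - e' s) = (if e = e' then of_nat m ^ k else 0)"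
proof -
  let ?f = "\<lambda>s d. \<rho> ^ ((e s + (m - e' s)) * d)"
  have entry: "char_vec \<rho> m k e $ r * char_vec \<rho> m k (\<lambda>s. m - e' s) $ r
      = (\<Prod>s\<in>{1..k}. ?f s (digit m k s r))" if "r < m ^ k" for r
  proof -
    have "char_vec \<rho> m k e $ r * char_vec \<rho> m k (\<lambda>s. m - e' s) $ r
        = \<rho> ^ ((\<Sum>s\<in>{1..k}. e s * digit m k s r) + (\<Sum>s\<in>{1..k}. (m - e' s) * digit m k s r))"
      using that by (simp add: char_vec_def power_add)
    also have "\<dots> = \<rho> ^ (\<Sum>s\<in>{1..k}. (e s + (m - e' s)) * digit m k s r)"
      by (simp add: sum.distrib distrib_right)
    also have "\<dots> = (\<Prod>s\<in>{1..k}. ?f s (digit m k s r))"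
      by (rule power_sum)
    finally show ?thesis .
  qed
  have "char_vec \<rho> m k e \<bullet> char_vec \<rho> m k (\<lambda>s. m - e' s)
      = (\<Sum>r<m ^ k. char_vec \<rho> m k e $ r * char_vec \<rho> m k (\<lambda>s. m - e' s) $ r)"
    by (simp add: scalar_prod_def atLeast0LessThan)
  also have "\<dots> = (\<Sum>r<m ^ k. \<Prod>s\<in>{1..k}. ?f s (digit m k s r))"
    by (rule sum.cong) (simp_all add: entry)
  also have "\<dots> = (\<Prod>s\<in>{1..k}. \<Sum>d<m. ?f s d)"
    by (rule sum_prod_digits[OF \<open>m > 0\<close>])
  also have "\<dots> = (if e = e' then of_nat m ^ k else 0)"
  proof (cases "e = e'")
    case True
    have "(\<Sum>d<m. ?f s d) = of_nat m" if "s \<in> {1..k}" for s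
    proof -
      have "e s + (m - e' s) = m" using PiE_mem[OF e that] True by simp
      then show ?thesis using prim unfolding primitive_root_of_unity_def by (simp add: power_mult)
    qed
    then show ?thesis using True by simp
  next
    case False
    then obtain s where s: "s \<in> {1..k}" "e s \<noteq> e' s"
      using PiE_ext[OF e e'] by blast
    moreover have "e s < m" "e' s < m" using e e' s by auto
    ultimately have "(e s + (m - e' s)) mod m \<noteq> 0"
      using add_less_cancel_right mod_if by auto
    then have "(\<Sum>d<m. ?f s d) = 0"
      by (rule sum_powers_primitive_root_of_unity[OF prim])
    then have "(\<Prod>s\<in>{1..k}. \<Sum>d<m. ?f s d) = 0"
      using s(1) by (intro prod_zero) auto
    then show ?thesis using False by simp
  qed
  finally show ?thesis .
qed

lemma inj_on_char_vec:
  assumes prim: "primitive_root_of_unity m \<rho>" and "m > 0"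
  shows "inj_on (char_vec \<rho> m k) (PiE {1..k} (\<lambda>_. {..<m}))"
proof
  fix e e' assume e: "e \<in> PiE {1..k} (\<lambda>_. {..<m})" and e': "e' \<in> PiE {1..k} (\<lambda>_. {..<m})"
    and eq: "char_vec \<rho> m k e = char_vec \<rho> m k e'"
  show "e = e'"
  proof (rule ccontr)
    assume "e \<noteq> e'"
    then have "char_vec \<rho> m k e' \<bullet> char_vec \<rho> m k (\<lambda>s. m - e' s) = 0"
      using scalar_prod_char_vec[OF assms e e'] eq by simp
    moreover have "char_vec \<rho> m k e' \<bullet> char_vec \<rho> m k (\<lambda>s. m - e' s) = of_nat m ^ k"
      using scalar_prod_char_vec[OF assms e' e'] by simp
    ultimately show False
      using of_nat_neq_0_if_primitive_root_of_unity[OF assms] by simp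
  qed
qed

lemma (in vec_space) lin_indpt_image_if_biorthogonal:
  assumes fin: "finite I" and f: "f ` I \<subseteq> carrier_vec n" and g: "g ` I \<subseteq> carrier_vec n"
    and dual: "\<And>a b. a \<in> I \<Longrightarrow> b \<in> I \<Longrightarrow> f a \<bullet> g b = (if a = b then c else 0)"
    and "c \<noteq> 0"
  shows "lin_indpt (f ` I)"
proof
  assume "lin_dep (f ` I)"
  then obtain a b where comb: "lincomb a (f ` I) = 0\<^sub>v n" and b: "b \<in> I" "a (f b) \<noteq> 0"
    using finite_lin_dep[OF finite_imageI[OF fin]] f by blast
  define v where "v = f b"
  have gb: "g b \<in> carrier_vec n" using g b(1) by auto
  have paired: "u \<bullet> g b = (if u = v then c else 0)" if u: "u \<in> f ` I" for u
  proof -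
    obtain a' where "a' \<in> I" "u = f a'" using u by blast
    then show ?thesis using dual[of a' b] dual[of b b] b(1) \<open>c \<noteq> 0\<close> unfolding v_def by auto
  qed
  have "0 = (\<Sum>r<n. lincomb a (f ` I) $ r * g b $ r)"
    using comb gb by simp
  also have "\<dots> = (\<Sum>r<n. \<Sum>u\<in>f ` I. a u * u $ r * g b $ r)"
    using f by (simp add: lincomb_index sum_distrib_right)
  also have "\<dots> = (\<Sum>u\<in>f ` I. a u * (u \<bullet> g b))"
    using gb by (subst sum.swap) (simp add: scalar_prod_def atLeast0LessThan sum_distrib_left mult.assoc)
  also have "\<dots> = (\<Sum>u\<in>f ` I. if u = v then a v * c else 0)"
    by (rule sum.cong) (simp_all add: paired)
  also have "\<dots> = a v * c"
    using b(1) fin by (simp add: v_def)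
  finally show False using b(2) \<open>c \<noteq> 0\<close> by (simp add: v_def)
qed

lemma (in vec_space) rank_eq_card_set_cols:
  assumes "A \<in> carrier_mat n nc" and "lin_indpt (set (cols A))"
  shows "rank A = card (set (cols A))"
  by (rule rank_card_indpt[OF assms(1)]) (use assms(2) in \<open>auto simp: maximal_def\<close>)

lemma set_cols_mult:
  assumes "A \<in> carrier_mat nr n" and "B \<in> carrier_mat n nc"
  shows "set (cols (A * B)) = (\<lambda>v. A *\<^sub>v v) ` set (cols B)"
proof -
  have "set (cols (A * B)) = (\<lambda>c. col (A * B) c) ` {0..<nc}"
    using assms by (simp add: cols_def)
  also have "\<dots> = (\<lambda>c. A *\<^sub>v col B c) ` {0..<nc}"
    by (intro image_cong refl col_mult2[OF assms]) simp
  also have "\<dots> = (\<lambda>v. A *\<^sub>v v) ` set (cols B)"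
    using assms by (simp add: cols_def image_image)
  finally show ?thesis .
qed

lemma Lat_V_eq_PiE:
  assumes "i \<in> {1..k}" and "m > 0"
  shows "Lat_V m k i = PiE {1..k} (\<lambda>s. if s = i then {0} else {..<m})"
  using assms by (auto simp: Lat_V_def PiE_iff extensional_def split: if_splits)

lemma card_Lat_V:
  assumes "i \<in> {1..k}" and "m > 0"
  shows "card (Lat_V m k i) = m ^ (k - 1)"
proof -
  have "card (Lat_V m k i) = (\<Prod>s\<in>{1..k}. if s = i then 1 else m)"
    unfolding Lat_V_eq_PiE[OF assms] by (auto simp: card_PiE intro!: prod.cong)
  also have "\<dots> = (\<Prod>s\<in>{1..k} - {i}. if s = i then 1 else m)"
    using assms(1) by (simp add: prod.remove)
  also have "\<dots> = m ^ (k - 1)"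
    using assms(1) by simp
  finally show ?thesis .
qed

lemma Union_Lat_shift_subset_PiE:
  assumes "j \<in> {1..k}" and "m > 0"
  shows "(\<Union>l\<in>{0..<m}. Lat_shift m j l (Lat_V m k i)) \<subseteq> PiE {1..k} (\<lambda>_. {..<m})"
  using assms by (auto simp: Lat_shift_def Lat_V_def PiE_def extensional_def)

lemma Union_Lat_shift_same:
  assumes "i \<in> {1..k}" and "m > 0"
  shows "(\<Union>l\<in>{0..<m}. Lat_shift m i l (Lat_V m k i)) = PiE {1..k} (\<lambda>_. {..<m})"
proof (rule equalityI[OF Union_Lat_shift_subset_PiE[OF assms]], rule subsetI)
  fix y assume y: "y \<in> PiE {1..k} (\<lambda>_. {..<m})"
  let ?x = "y(i := 0)"
  have "?x \<in> Lat_V m k i"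
    using PiE_fun_upd[OF _ y, of 0 i] assms by (simp add: Lat_V_def insert_absorb)
  moreover have "y i < m" using PiE_mem[OF y assms(1)] by simp
  then have "y = ?x(i := (?x i + y i) mod m)" by simp
  ultimately have "y \<in> Lat_shift m i (y i) (Lat_V m k i)"
    unfolding Lat_shift_def by (intro image_eqI)
  then show "y \<in> (\<Union>l\<in>{0..<m}. Lat_shift m i l (Lat_V m k i))"
    using \<open>y i < m\<close> by auto
qed

lemma Union_Lat_shift_other:
  assumes "i \<in> {1..k}" "j \<in> {1..k}" "i \<noteq> j" and "m > 0"
  shows "(\<Union>l\<in>{0..<m}. Lat_shift m j l (Lat_V m k i)) = Lat_V m k i"
proof
  have "x(j := (x j + l) mod m) \<in> Lat_V m k i" if x: "x \<in> Lat_V m k i" for x l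
    using PiE_fun_upd[of "(x j + l) mod m" "\<lambda>_. {..<m}" j x "{1..k}"] x assms
    by (simp add: Lat_V_def insert_absorb)
  then show "(\<Union>l\<in>{0..<m}. Lat_shift m j l (Lat_V m k i)) \<subseteq> Lat_V m k i"
    by (auto simp: Lat_shift_def)
  show "Lat_V m k i \<subseteq> (\<Union>l\<in>{0..<m}. Lat_shift m j l (Lat_V m k i))"
  proof
    fix x assume x: "x \<in> Lat_V m k i"
    then have "x j < m" using assms(2) by (auto simp: Lat_V_def)
    then have "x = x(j := (x j + 0) mod m)" by simp
    then have "x \<in> Lat_shift m j 0 (Lat_V m k i)"
      unfolding Lat_shift_def using x by (rule image_eqI)
    then show "x \<in> (\<Union>l\<in>{0..<m}. Lat_shift m j l (Lat_V m k i))"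
      using assms(4) by auto
  qed
qed

lemma card_Union_Lat_shift:
  assumes "i \<in> {1..k}" "j \<in> {1..k}" and "m > 0"
  shows "card (\<Union>l\<in>{0..<m}. Lat_shift m j l (Lat_V m k i)) = (if i = j then m ^ k else m ^ (k - 1))"
  using assms Union_Lat_shift_same Union_Lat_shift_other card_Lat_V by (simp add: card_PiE)

lemma restrict_enum_exp_image:
  assumes "i \<in> {1..k}" and "m > 0"
  shows "(\<lambda>t. restrict (enum_exp m k i t) {1..k}) ` {..<m ^ (k - 1)} = Lat_V m k i"
proof (rule card_subset_eq)
  let ?R = "\<lambda>t. restrict (enum_exp m k i t) {1..k}"
  have "inj_on ?R {..<m ^ (k - 1)}"
  proof
    fix t t' assume t: "t \<in> {..<m ^ (k - 1)}" and t': "t' \<in> {..<m ^ (k - 1)}" and eq: "?R t = ?R t'"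
    have "t div m ^ p mod m = t' div m ^ p mod m" if "p < k - 1" for p
    proof -
      define s where "s = (if p + 1 < i then p + 1 else p + 2)"
      have "s \<in> {1..k}" "s \<noteq> i" "(if s < i then s - 1 else s - 2) = p"
        using that assms(1) by (auto simp: s_def)
      then show ?thesis using fun_cong[OF eq, of s] by (simp add: enum_exp_def)
    qed
    then show "t = t'" using t t' by (intro nat_eq_if_digits_eq[OF assms(2), of t "k - 1" t']) auto
  qed
  then show "card (?R ` {..<m ^ (k - 1)}) = card (Lat_V m k i)"
    using assms by (simp add: card_image card_Lat_V)
  show "?R ` {..<m ^ (k - 1)} \<subseteq> Lat_V m k i"
    using assms by (auto simp: Lat_V_def enum_exp_def)
  show "finite (Lat_V m k i)"
    by (rule finite_subset[of _ "PiE {1..k} (\<lambda>_. {..<m})"]) (auto simp: Lat_V_def intro: finite_PiE)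
qed

lemma Vmat_carrier: "Vmat \<rho> m k i \<in> carrier_mat (m ^ k) (m ^ (k - 1))"
proof -
  have "mat_of_cols (m ^ k) (map (\<lambda>t. colvec \<rho> m k i (enum_exp m k i t)) [0..<m ^ (k - 1)])
      \<in> carrier_mat (m ^ k) (length (map (\<lambda>t. colvec \<rho> m k i (enum_exp m k i t)) [0..<m ^ (k - 1)]))"
    by (rule mat_of_cols_carrier(1))
  then show ?thesis unfolding Vmat_def by simp
qed

lemma set_cols_Vmat:
  assumes "i \<in> {1..k}" and "m > 0"
  shows "set (cols (Vmat \<rho> m k i)) = char_vec \<rho> m k ` Lat_V m k i"
proof -
  have "set (cols (Vmat \<rho> m k i)) = (\<lambda>t. colvec \<rho> m k i (enum_exp m k i t)) ` {..<m ^ (k - 1)}"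
    unfolding Vmat_def
    by (subst cols_mat_of_cols) (auto simp: colvec_eq_char_vec atLeast0LessThan)
  also have "\<dots> = char_vec \<rho> m k ` (\<lambda>t. restrict (enum_exp m k i t) {1..k}) ` {..<m ^ (k - 1)}"
    unfolding image_image colvec_eq_char_vec
    by (intro image_cong refl char_vec_cong) (auto simp: enum_exp_def)
  finally show ?thesis
    unfolding restrict_enum_exp_image[OF assms] .
qed

lemma Xmat_power_carrier: "Xmat \<rho> m k j ^\<^sub>m l \<in> carrier_mat (m ^ k) (m ^ k)"
  by (simp add: Xmat_eq_mat_diag power_mat_diag)

lemma set_cols_Xmat_power_Vmat:
  assumes "\<rho> ^ m = 1" "i \<in> {1..k}" "j \<in> {1..k}" and "m > 0"
  shows "set (cols (Xmat \<rho> m k j ^\<^sub>m l * Vmat \<rho> m k i))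
    = char_vec \<rho> m k ` Lat_shift m j l (Lat_V m k i)"
proof -
  have "set (cols (Xmat \<rho> m k j ^\<^sub>m l * Vmat \<rho> m k i))
      = (\<lambda>e. char_vec \<rho> m k (e(j := e j + l))) ` Lat_V m k i"
    by (simp add: set_cols_mult[OF Xmat_power_carrier Vmat_carrier] set_cols_Vmat[OF assms(2,4)]
        image_image Xmat_power_mult_char_vec[OF assms(3)])
  also have "\<dots> = (\<lambda>e. char_vec \<rho> m k (e(j := (e j + l) mod m))) ` Lat_V m k i"
    by (intro image_cong refl char_vec_cong_mod[OF assms(1)]) simp
  finally show ?thesis
    by (simp add: Lat_shift_def image_image)
qed

lemma set_cols_bigmat:
  assumes "\<rho> ^ m = 1" "i \<in> {1..k}" "j \<in> {1..k}" and "m > 0"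
  shows "set (cols (bigmat \<rho> m k i j)) = char_vec \<rho> m k ` (\<Union>l\<in>{0..<m}. Lat_shift m j l (Lat_V m k i))"
proof -
  let ?C = "\<lambda>l. cols (Xmat \<rho> m k j ^\<^sub>m l * Vmat \<rho> m k i)"
  have "set (?C l) \<subseteq> carrier_vec (m ^ k)" for l
    using cols_dim[of "Xmat \<rho> m k j ^\<^sub>m l * Vmat \<rho> m k i"] by (simp add: Xmat_def)
  then have "set (cols (bigmat \<rho> m k i j)) = (\<Union>l\<in>{0..<m}. set (?C l))"
    unfolding bigmat_def by (subst cols_mat_of_cols) auto
  then show ?thesis
    by (simp add: set_cols_Xmat_power_Vmat[OF assms] image_UN)
qed

lemma (in vec_space) rank_bigmat:
  assumes "n = m ^ k" and prim: "primitive_root_of_unity m \<rho>" and "m > 0"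
    and "i \<in> {1..k}" "j \<in> {1..k}"
  shows "rank (bigmat \<rho> m k i j) = card (\<Union>l\<in>{0..<m}. Lat_shift m j l (Lat_V m k i))"
proof -
  let ?U = "\<Union>l\<in>{0..<m}. Lat_shift m j l (Lat_V m k i)"
  have U: "?U \<subseteq> PiE {1..k} (\<lambda>_. {..<m})"
    by (rule Union_Lat_shift_subset_PiE[OF assms(5,3)])
  have cols: "set (cols (bigmat \<rho> m k i j)) = char_vec \<rho> m k ` ?U"
    using prim assms(3-5) unfolding primitive_root_of_unity_def by (intro set_cols_bigmat) simp_all
  have "lin_indpt (char_vec \<rho> m k ` ?U)"
  proof (rule lin_indpt_image_if_biorthogonal[where g = "\<lambda>e. char_vec \<rho> m k (\<lambda>s. m - e s)"])
    show "finite ?U" by (rule finite_subset[OF U]) (simp add: finite_PiE)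
    show "char_vec \<rho> m k e \<bullet> char_vec \<rho> m k (\<lambda>s. m - e' s) = (if e = e' then of_nat m ^ k else 0)"
      if "e \<in> ?U" "e' \<in> ?U" for e e'
      using scalar_prod_char_vec[OF prim assms(3)] U that by blast
    show "of_nat m ^ k \<noteq> (0 :: 'a)"
      using of_nat_neq_0_if_primitive_root_of_unity[OF prim assms(3)] by simp
  qed (use assms(1) in auto)
  moreover have "bigmat \<rho> m k i j \<in> carrier_mat n (dim_col (bigmat \<rho> m k i j))"
    unfolding bigmat_def assms(1) by (simp add: carrier_matI)
  ultimately have "rank (bigmat \<rho> m k i j) = card (char_vec \<rho> m k ` ?U)"
    using rank_eq_card_set_cols cols by simp
  also have "\<dots> = card ?U"
    by (rule card_image[OF inj_on_subset[OF inj_on_char_vec[OF prim assms(3)] U]])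
  finally show ?thesis .
qed

text \<open>Finiteness of the field and \<open>m dvd q - 1\<close> only guarantee that \<open>\<rho>\<close> exists.\<close>
theorem lemma4:
  fixes \<rho> :: "'a::field" and m k i j :: nat
  assumes "finite (UNIV :: 'a set)"
    and "m \<ge> 2" and "k \<ge> 1"
    and "m dvd card (UNIV :: 'a set) - 1"
    and "\<rho> ^ m = 1" and "\<forall>t. 0 < t \<and> t < m \<longrightarrow> \<rho> ^ t \<noteq> 1"
    and "i \<in> {1..k}" and "j \<in> {1..k}"
  shows "vec_space.rank (m ^ k) (bigmat \<rho> m k i j)
           = card (\<Union>l\<in>{0..<m}. Lat_shift m j l (Lat_V m k i))
       \<and> card (\<Union>l\<in>{0..<m}. Lat_shift m j l (Lat_V m k i))
           = (if i = j then m ^ k else m ^ (k - 1))"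
proof
  have prim: "primitive_root_of_unity m \<rho>"
    using assms(5,6) by (simp add: primitive_root_of_unity_def)
  have "m > 0" using assms(2) by simp
  show "vec_space.rank (m ^ k) (bigmat \<rho> m k i j) = card (\<Union>l\<in>{0..<m}. Lat_shift m j l (Lat_V m k i))"
    by (rule vec_space.rank_bigmat[OF refl prim \<open>m > 0\<close> assms(7,8)])
  show "card (\<Union>l\<in>{0..<m}. Lat_shift m j l (Lat_V m k i)) = (if i = j then m ^ k else m ^ (k - 1))"
    by (rule card_Union_Lat_shift[OF assms(7,8) \<open>m > 0\<close>])
qed

end
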